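(* Let $\delta^{*}_{1/2}$ be the decision rule \[ \delta^{*}_{1/2}(\mathbf{y},u)=\begin{cases}1 & \text{if } \sum_{i=1}^{n} w_i^{*} y_i > C^{*},\\ 0 & \text{if } \sum_{i=1}^{n} w_i^{*} y_i < C^{*},\\ u & \text{if } \sum_{i=1}^{n} w_i^{*} y_i = C^{*},\end{cases} \qquad w_i^{*}=2\log\!\left(\frac{\gamma_i}{1-\gamma_i}\right),\quad C^{*}=\sum_{i=1}^{n}\frac{w_i^{*}}{2}. \] This is the Bayes decision rule for the prior $P(\theta=1)=c=\tfrac12$, for which $\log\frac{1-c}{c}=0$. Then $\delta^{*}_{1/2}$ has constant risk in $\theta$ and is a minimax decision rule.
   Context: The setting is a crowdsourcing problem with known expert accuracies. The unknown quantity is $\theta\in\{0,1\}$, and the observations are expert opinions $\mathbf{Y}=(Y_1,\ldots,Y_n)\in\{0,1\}^n$ together with a fair coin flip $U\sim\text{Bernoulli}(1/2)$ that is independent of $\mathbf{Y}$. The following assumptions hold: - $Y_1,\ldots,Y_n$ are independent conditionally on $\theta$. - $\gamma_i:=P(Y_i=1\mid\theta=1)=P(Y_i=0\mid\theta=0)$ is known for each $i$. - $n$ is odd. A decision rule is a map $\delta:\{0,1\}^n\times\{0,1\}\to\{0,1\}$. The loss is $L(\theta,a)=\mathbb{I}(\theta\neq a)$, and the risk is $R(\delta,\theta)=\mathbb{E}[L(\delta(\mathbf{Y},U),\theta)\mid\theta]$. A rule $\delta^*$ is minimax if $\sup_\theta R(\delta^*,\theta)=\inf_\delta\sup_\theta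 R(\delta,\theta)$. *)

theory Defs
  imports Complex_Main "HOL-Library.FuncSet"
begin

text \<open>Observations: an expert-opinion vector y in {0,1}^n is a function on {..<n}
  (extensional, value True meaning Y_i = 1).  The state theta in {0,1} is a bool
  (True meaning theta = 1).  The fair coin U is a bool (True meaning U = 1).\<close>

type_synonym decision_rule = "(nat \<Rightarrow> bool) \<Rightarrow> bool \<Rightarrow> bool"

definition obs_space :: "nat \<Rightarrow> (nat \<Rightarrow> bool) set" where
  "obs_space n = ({..<n} \<rightarrow>\<^sub>E (UNIV :: bool set))"

text \<open>P(Y = y | theta), using conditional independence and
  P(Y_i = theta | theta) = gamma_i.\<close>
definition lik :: "nat \<Rightarrow> (nat \<Rightarrow> real) \<Rightarrow> bool \<Rightarrow> (nat \<Rightarrow> bool) \<Rightarrow> real" where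
  "lik n \<gamma> \<theta> y = (\<Prod>i<n. if y i = \<theta> then \<gamma> i else 1 - \<gamma> i)"

text \<open>Risk R(delta, theta) = E[ 1(delta(Y,U) \<noteq> theta) | theta ], U ~ Bernoulli(1/2)
  independent of Y.\<close>
definition risk :: "nat \<Rightarrow> (nat \<Rightarrow> real) \<Rightarrow> decision_rule \<Rightarrow> bool \<Rightarrow> real" where
  "risk n \<gamma> \<delta> \<theta> =
     (\<Sum>y\<in>obs_space n. \<Sum>u\<in>(UNIV::bool set).
        lik n \<gamma> \<theta> y * (1/2) * (if \<delta> y u \<noteq> \<theta> then 1 else 0))"

definition is_minimax :: "nat \<Rightarrow> (nat \<Rightarrow> real) \<Rightarrow> decision_rule \<Rightarrow> bool" where
  "is_minimax n \<gamma> \<delta>s \<longleftrightarrow>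
     (SUP \<theta>. risk n \<gamma> \<delta>s \<theta>) = (INF \<delta>. SUP \<theta>. risk n \<gamma> \<delta> \<theta>)"

definition w_star :: "(nat \<Rightarrow> real) \<Rightarrow> nat \<Rightarrow> real" where
  "w_star \<gamma> i = 2 * ln (\<gamma> i / (1 - \<gamma> i))"

definition C_star :: "nat \<Rightarrow> (nat \<Rightarrow> real) \<Rightarrow> real" where
  "C_star n \<gamma> = (\<Sum>i<n. w_star \<gamma> i / 2)"

definition delta_half :: "nat \<Rightarrow> (nat \<Rightarrow> real) \<Rightarrow> decision_rule" where
  "delta_half n \<gamma> y u =
     (let s = (\<Sum>i<n. w_star \<gamma> i * of_bool (y i)) in
      if s > C_star n \<gamma> then True
      else if s < C_star n \<gamma> then False
      else u)"

end

theory Submission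
  imports Defs
begin

text \<open>With \<open>w\<^sub>i = 2 log(\<gamma>\<^sub>i/(1-\<gamma>\<^sub>i))\<close> the likelihood ratio of an observation is
  \<open>exp(\<Sum> w\<^sub>i y\<^sub>i - C)\<close>, so \<open>\<delta>*\<close> picks the state of larger likelihood and minimises
  \<open>R(\<delta>,1) + R(\<delta>,0)\<close> (it is Bayes for the uniform prior). Flipping every vote swaps
  the two likelihoods and reflects the score about \<open>C\<close>, which exchanges the two risks
  of \<open>\<delta>*\<close>, so its risk is constant. A rule with constant risk that minimises the sum
  of the risks also minimises their maximum.\<close>

abbreviation vote_score :: "nat \<Rightarrow> (nat \<Rightarrow> real) \<Rightarrow> (nat \<Rightarrow> bool) \<Rightarrow> real" where
  "vote_score n \<gamma> y \<equiv> (\<Sum>i<n. w_star \<gamma> i * of_bool (y i))"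

lemma lik_pos:
  assumes "\<And>i. i < n \<Longrightarrow> 0 < \<gamma> i \<and> \<gamma> i < 1"
  shows "0 < lik n \<gamma> \<theta> y"
  unfolding lik_def using assms by (intro prod_pos) auto

lemma lik_factor_ratio:
  fixes g :: real
  assumes "0 < g" "g < 1"
  shows "(if b then g else 1 - g) =
    exp (2 * ln (g / (1 - g)) * of_bool b - ln (g / (1 - g))) * (if b then 1 - g else g)"
proof -
  have q: "0 < g / (1 - g)" using assms by simp
  show ?thesis
  proof (cases b)
    case True
    then show ?thesis using q assms by simp
  next
    case False
    then show ?thesis using q assms by (simp add: exp_minus field_simps)
  qed
qed

lemma lik_True_eq_exp_score:
  assumes "\<And>i. i < n \<Longrightarrow> 0 < \<gamma> i \<and> \<gamma> i < 1"
  shows "lik n \<gamma> True y = exp (vote_score n \<gamma> y - C_star n \<gamma>) * lik n \<gamma> False y"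
proof -
  have "lik n \<gamma> True y =
      (\<Prod>i<n. exp (w_star \<gamma> i * of_bool (y i) - w_star \<gamma> i / 2)
               * (if y i = False then \<gamma> i else 1 - \<gamma> i))"
    unfolding lik_def w_star_def
  proof (intro prod.cong refl)
    fix i assume "i \<in> {..<n}"
    with assms have "0 < \<gamma> i" "\<gamma> i < 1" by auto
    from lik_factor_ratio[OF this, of "y i"]
    show "(if y i = True then \<gamma> i else 1 - \<gamma> i) =
        exp (2 * ln (\<gamma> i / (1 - \<gamma> i)) * of_bool (y i) - 2 * ln (\<gamma> i / (1 - \<gamma> i)) / 2)
        * (if y i = False then \<gamma> i else 1 - \<gamma> i)"
      by simp
  qed
  also have "\<dots> = exp (\<Sum>i<n. w_star \<gamma> i * of_bool (y i) - w_star \<gamma> i / 2) * lik n \<gamma> False y"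
    by (simp add: prod.distrib exp_sum lik_def)
  also have "(\<Sum>i<n. w_star \<gamma> i * of_bool (y i) - w_star \<gamma> i / 2) = vote_score n \<gamma> y - C_star n \<gamma>"
    by (simp add: C_star_def sum_subtractf)
  finally show ?thesis .
qed

lemma risk_True_plus_risk_False:
  "risk n \<gamma> \<delta> True + risk n \<gamma> \<delta> False =
   (\<Sum>y\<in>obs_space n. \<Sum>u\<in>(UNIV::bool set).
        (1/2) * (if \<delta> y u then lik n \<gamma> False y else lik n \<gamma> True y))"
  unfolding risk_def sum.distrib[symmetric]
  by (intro sum.cong refl) (auto simp: UNIV_bool)

lemma delta_half_picks_likelier_state:
  assumes "\<And>i. i < n \<Longrightarrow> 0 < \<gamma> i \<and> \<gamma> i < 1"
  shows "(if delta_half n \<gamma> y u then lik n \<gamma> False y else lik n \<gamma> True y)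
         = min (lik n \<gamma> True y) (lik n \<gamma> False y)"
proof -
  note ratio = lik_True_eq_exp_score[OF assms, where y = y]
  have pos: "0 < lik n \<gamma> False y" by (rule lik_pos[OF assms])
  consider "vote_score n \<gamma> y > C_star n \<gamma>" | "vote_score n \<gamma> y < C_star n \<gamma>"
    | "vote_score n \<gamma> y = C_star n \<gamma>" by linarith
  then show ?thesis
  proof cases
    case 1
    then have "lik n \<gamma> True y > lik n \<gamma> False y" using ratio pos by simp
    then show ?thesis using 1 by (simp add: delta_half_def)
  next
    case 2
    then have "lik n \<gamma> True y < lik n \<gamma> False y" using ratio pos by simp
    then show ?thesis using 2 by (simp add: delta_half_def)
  next
    case 3
    then show ?thesis using ratio by simp
  qed
qed

lemma delta_half_minimises_risk_sum:
  assumes "\<And>i. i < n \<Longrightarrow> 0 < \<gamma> i \<and> \<gamma> i < 1"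
  shows "risk n \<gamma> (delta_half n \<gamma>) True + risk n \<gamma> (delta_half n \<gamma>) False
     \<le> risk n \<gamma> \<delta> True + risk n \<gamma> \<delta> False"
proof -
  have "(1/2) * (if delta_half n \<gamma> y u then lik n \<gamma> False y else lik n \<gamma> True y)
      \<le> (1/2) * (if \<delta> y u then lik n \<gamma> False y else lik n \<gamma> True y)" for y u
    by (simp add: delta_half_picks_likelier_state[OF assms])
  then show ?thesis
    unfolding risk_True_plus_risk_False by (intro sum_mono)
qed

definition flip_votes :: "nat \<Rightarrow> (nat \<Rightarrow> bool) \<Rightarrow> (nat \<Rightarrow> bool)" where
  "flip_votes n y = (\<lambda>i. if i < n then \<not> y i else undefined)"

lemma bij_betw_flip_votes: "bij_betw (flip_votes n) (obs_space n) (obs_space n)"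
  by (rule bij_betw_byWitness[where f' = "flip_votes n"])
     (auto simp: obs_space_def flip_votes_def PiE_def extensional_def fun_eq_iff)

lemma lik_flip_votes: "lik n \<gamma> \<theta> (flip_votes n y) = lik n \<gamma> (\<not> \<theta>) y"
  unfolding lik_def flip_votes_def by (intro prod.cong) auto

lemma vote_score_flip_votes:
  "vote_score n \<gamma> (flip_votes n y) = 2 * C_star n \<gamma> - vote_score n \<gamma> y"
proof -
  have "vote_score n \<gamma> (flip_votes n y) = (\<Sum>i<n. w_star \<gamma> i - w_star \<gamma> i * of_bool (y i))"
    unfolding flip_votes_def by (intro sum.cong) auto
  then show ?thesis by (simp add: C_star_def sum_subtractf sum_divide_distrib[symmetric])
qed

lemma delta_half_flip_votes:
  "delta_half n \<gamma> (flip_votes n y) u = (\<not> delta_half n \<gamma> y (\<not> u))"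
  unfolding delta_half_def Let_def vote_score_flip_votes by auto

lemma delta_half_constant_risk:
  "risk n \<gamma> (delta_half n \<gamma>) True = risk n \<gamma> (delta_half n \<gamma>) False"
proof -
  let ?r = "\<lambda>\<theta> y. \<Sum>u\<in>(UNIV::bool set).
        lik n \<gamma> \<theta> y * (1/2) * (if delta_half n \<gamma> y u \<noteq> \<theta> then 1 else 0)"
  have "risk n \<gamma> (delta_half n \<gamma>) False = (\<Sum>y\<in>obs_space n. ?r False (flip_votes n y))"
    unfolding risk_def by (rule sum.reindex_bij_betw[OF bij_betw_flip_votes, symmetric])
  also have "\<dots> = (\<Sum>y\<in>obs_space n. ?r True y)"
    by (simp add: lik_flip_votes delta_half_flip_votes UNIV_bool) (simp only: add.commute)
  finally show ?thesis by (simp add: risk_def)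
qed

lemma SUP_bool_eq_max: "(SUP \<theta>. (f::bool \<Rightarrow> real) \<theta>) = max (f True) (f False)"
proof -
  have "range f = {f True, f False}" by (auto simp: UNIV_bool)
  then show ?thesis by (auto intro!: cSup_eq_maximum)
qed

lemma is_minimax_if_constant_risk_minimises_risk_sum:
  assumes equalizer: "risk n \<gamma> \<delta> True = risk n \<gamma> \<delta> False"
    and bayes: "\<And>\<delta>'. risk n \<gamma> \<delta> True + risk n \<gamma> \<delta> False
                      \<le> risk n \<gamma> \<delta>' True + risk n \<gamma> \<delta>' False"
  shows "is_minimax n \<gamma> \<delta>"
  unfolding is_minimax_def
proof (rule cInf_eq_minimum[symmetric])
  fix x assume "x \<in> range (\<lambda>\<delta>'. SUP \<theta>. risk n \<gamma> \<delta>' \<theta>)"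
  then obtain \<delta>' where x: "x = (SUP \<theta>. risk n \<gamma> \<delta>' \<theta>)" by auto
  show "(SUP \<theta>. risk n \<gamma> \<delta> \<theta>) \<le> x"
    unfolding x SUP_bool_eq_max using equalizer bayes[of \<delta>'] by linarith
qed simp

theorem theorem3:
  fixes n :: nat and \<gamma> :: "nat \<Rightarrow> real"
  assumes "odd n"
    and "\<And>i. i < n \<Longrightarrow> 0 < \<gamma> i \<and> \<gamma> i < 1"
  shows "risk n \<gamma> (delta_half n \<gamma>) True = risk n \<gamma> (delta_half n \<gamma>) False
         \<and> is_minimax n \<gamma> (delta_half n \<gamma>)"
proof
  show "is_minimax n \<gamma> (delta_half n \<gamma>)"
    using delta_half_constant_risk delta_half_minimises_risk_sum[OF assms(2)]
    by (rule is_minimax_if_constant_risk_minimises_risk_sum)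
qed (rule delta_half_constant_risk)

end
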